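(* Every ordered graph $F$ on $k$ vertices that does not contain a monotone path of length two satisfies $\rho_{<}(F)\le\rho_{<}(H_k)$.
   Context: An ordered graph is a graph with a totally ordered vertex set. An ordered graph $G$ contains $F$ if there is an injective order-preserving map $V(F)\to V(G)$ sending edges to edges; otherwise $G$ is $F$-free. $\rho_{<}(F,G)=\max\{e(G')/e(G): G'\subseteq G,\ G'\ F\text{-free}\}$ and $\rho_{<}(F)=\inf_G\rho_{<}(F,G)$ over all ordered graphs $G$. A monotone path of length two consists of vertices $u<v<w$ with $uv,vw$ edges. $H_k$ is the ordered graph on $[k]\times\{0,1\}$, ordered lexicographically, with edge set $\{(x,0)(y,1): x\le y\}$. *)

theory Defs
  imports Complex_Main
begin

text \<open>An ordered graph on n vertices is represented (up to order-isomorphism) by the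
vertex set {0..<n} with the natural order, and an edge set E of pairs (i,j) with i < j < n
(each edge stored once, smaller endpoint first).\<close>

definition ordgraph :: "nat \<Rightarrow> (nat \<times> nat) set \<Rightarrow> bool" where
  "ordgraph n E \<longleftrightarrow> E \<subseteq> {(i,j). i < j \<and> j < n}"

definition contains :: "nat \<Rightarrow> (nat \<times> nat) set \<Rightarrow> nat \<Rightarrow> (nat \<times> nat) set \<Rightarrow> bool" where
  "contains k F n G \<longleftrightarrow>
     (\<exists>f. strict_mono_on {..<k} f \<and> f ` {..<k} \<subseteq> {..<n} \<and>
          (\<forall>(i,j)\<in>F. (f i, f j) \<in> G))"

text \<open>The 0 is inserted only so that the maximum is defined when no F-free subgraph exists
(possible only if F has no edges); all ratios are nonnegative anyway.\<close>
definition rho_FG :: "nat \<Rightarrow> (nat \<times> nat) set \<Rightarrow> nat \<Rightarrow> (nat \<times> nat) set \<Rightarrow> real" where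
  "rho_FG k F n G = Max (insert 0
     {real (card G') / real (card G) | G'. G' \<subseteq> G \<and> \<not> contains k F n G'})"

definition rho :: "nat \<Rightarrow> (nat \<times> nat) set \<Rightarrow> real" where
  "rho k F = Inf {rho_FG k F n G | n G. ordgraph n G \<and> G \<noteq> {}}"

definition has_monotone_P2 :: "(nat \<times> nat) set \<Rightarrow> bool" where
  "has_monotone_P2 F \<longleftrightarrow> (\<exists>u v w. u < v \<and> v < w \<and> (u,v) \<in> F \<and> (v,w) \<in> F)"

text \<open>H_k on [k] x {0,1} ordered lexicographically; we index [k] by 0..<k and use the
order-isomorphism (x,b) |-> 2x+b onto {0..<2k}. Edges (x,0)(y,1) with x \<le> y.\<close>
definition lexidx :: "nat \<times> nat \<Rightarrow> nat" where
  "lexidx p = 2 * fst p + snd p"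

definition H_edges :: "nat \<Rightarrow> (nat \<times> nat) set" where
  "H_edges k = {(lexidx (x,0), lexidx (y,1)) | x y. x \<le> y \<and> y < k}"

end

theory Submission
  imports Defs
begin

text \<open>A vertex v of F is sent to (v,1) if it has a neighbour to its left and to (v,0)
otherwise. Without a monotone path of length two the left endpoint of an edge has no left
neighbour, so every edge uv with u < v lands on an edge (u,0)(v,1) of H_k; thus F is
contained in H_k. Containment is transitive, so every F-free subgraph of a host graph G is
also H_k-free, giving rho(F,G) \<le> rho(H_k,G) for every G and hence the inequality of the
infima.\<close>

lemma contains_trans:
  assumes "contains k F m H" and "contains m H n G"
  shows "contains k F n G"
proof -
  obtain f where f: "strict_mono_on {..<k} f" "f ` {..<k} \<subseteq> {..<m}"
      "\<forall>(i,j)\<in>F. (f i, f j) \<in> H" using assms(1) unfolding contains_def by blast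
  obtain g where g: "strict_mono_on {..<m} g" "g ` {..<m} \<subseteq> {..<n}"
      "\<forall>(i,j)\<in>H. (g i, g j) \<in> G" using assms(2) unfolding contains_def by blast
  have "strict_mono_on {..<k} (g \<circ> f)"
    using f(1,2) g(1) unfolding strict_mono_on_def by (auto simp: image_subset_iff)
  moreover have "(g \<circ> f) ` {..<k} \<subseteq> {..<n}" using f(2) g(2) by auto
  moreover have "\<forall>(i,j)\<in>F. ((g \<circ> f) i, (g \<circ> f) j) \<in> G" using f(3) g(3) by auto
  ultimately show ?thesis unfolding contains_def by blast
qed

lemma contains_H_edges_if_no_monotone_P2:
  assumes F: "ordgraph k F" and no_P2: "\<not> has_monotone_P2 F"
  shows "contains k F (2 * k) (H_edges k)"
proof -
  define \<phi> where "\<phi> v = 2 * v + (if \<exists>u. (u, v) \<in> F then 1 else 0)" for v :: nat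
  have "strict_mono_on {..<k} \<phi>"
    unfolding strict_mono_on_def \<phi>_def by auto
  moreover have "\<phi> ` {..<k} \<subseteq> {..<2 * k}"
    unfolding \<phi>_def by auto
  moreover have "(\<phi> u, \<phi> v) \<in> H_edges k" if uv: "(u, v) \<in> F" for u v
  proof -
    have "u < v" "v < k" using F uv unfolding ordgraph_def by auto
    have "(w, u) \<notin> F" for w
      using F no_P2 uv unfolding ordgraph_def has_monotone_P2_def by blast
    then have "\<phi> u = lexidx (u, 0)" "\<phi> v = lexidx (v, 1)"
      using uv unfolding \<phi>_def lexidx_def by auto
    moreover have "(lexidx (u, 0), lexidx (v, 1)) \<in> H_edges k"
      unfolding H_edges_def using \<open>u < v\<close> \<open>v < k\<close> by force
    ultimately show ?thesis by simp
  qed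
  ultimately show ?thesis unfolding contains_def by blast
qed

text \<open>No finiteness of G is needed: for infinite G, card G = 0 and every ratio is 0.\<close>
lemma finite_edge_ratios:
  "finite {real (card G') / real (card G) | G'. G' \<subseteq> G \<and> P G'}"
proof (cases "finite G")
  case True
  have "{real (card G') / real (card G) | G'. G' \<subseteq> G \<and> P G'}
          \<subseteq> (\<lambda>G'. real (card G') / real (card G)) ` Pow G" by blast
  then show ?thesis using True by (meson finite_Pow_iff finite_imageI finite_subset)
next
  case False
  then have "{real (card G') / real (card G) | G'. G' \<subseteq> G \<and> P G'} \<subseteq> {0}" by auto
  then show ?thesis using finite_subset by blast
qed

lemma rho_FG_nonneg: "0 \<le> rho_FG k F n G"
  unfolding rho_FG_def by (intro Max_ge) (auto simp: finite_edge_ratios)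

lemma rho_FG_mono:
  assumes "contains k F m H"
  shows "rho_FG k F n G \<le> rho_FG m H n G"
  unfolding rho_FG_def
proof (intro Max_mono)
  show "insert 0 {real (card G') / real (card G) | G'. G' \<subseteq> G \<and> \<not> contains k F n G'}
      \<subseteq> insert 0 {real (card G') / real (card G) | G'. G' \<subseteq> G \<and> \<not> contains m H n G'}"
    using contains_trans[OF assms] by blast
qed (auto simp: finite_edge_ratios)

lemma rho_mono:
  assumes "contains k F m H"
  shows "rho k F \<le> rho m H"
  unfolding rho_def
proof (rule cInf_mono)
  have "ordgraph 2 {(0, 1)}" unfolding ordgraph_def by auto
  then show "{rho_FG m H n G | n G. ordgraph n G \<and> G \<noteq> {}} \<noteq> {}" by blast
  show "bdd_below {rho_FG k F n G | n G. ordgraph n G \<and> G \<noteq> {}}"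
    unfolding bdd_below_def using rho_FG_nonneg by blast
  show "\<exists>a\<in>{rho_FG k F n G | n G. ordgraph n G \<and> G \<noteq> {}}. a \<le> b"
    if "b \<in> {rho_FG m H n G | n G. ordgraph n G \<and> G \<noteq> {}}" for b
    using that rho_FG_mono[OF assms] by blast
qed

theorem corollary4p2:
  fixes k :: nat and F :: "(nat \<times> nat) set"
  assumes "ordgraph k F"
    and "\<not> has_monotone_P2 F"
  shows "rho k F \<le> rho (2 * k) (H_edges k)"
  using rho_mono[OF contains_H_edges_if_no_monotone_P2[OF assms]] .

end
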